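(* Let $H,K$ be Hilbert spaces, $m\geq 2$, and let $x_{1},\dots,x_{m}\in B(H)$ and $y_{1},\dots,y_{m}\in B(K)$ be self-adjoint contractions, with $B=\sum_{i=1}^{m}x_{i}\otimes y_{i}$. For $i\neq j$ set \[ \phi_{ij}=\frac{1}{2}\Big(\|[x_{i},x_{j}]\|\,\|[y_{i},y_{j}]\|+\|\{x_{i},x_{j}\}\|\,\|\{y_{i},y_{j}\}\|\Big)\geq 0. \] Let $G$ be a simple undirected graph on $\{1,\dots,m\}$ with edge set $E(G)$, neighbor sets $N(i)$, degrees $\deg(i)=|N(i)|$, and minimum degree $\delta=\min_{i}\deg(i)\geq 1$. Assume that for every pair $i\neq j$ with $(i,j)\notin E(G)$, \[ \phi_{ij}\leq\frac{1}{\deg(i)}\sum_{k\in N(i)}\phi_{ik}+\frac{1}{\deg(j)}\sum_{k\in N(j)}\phi_{jk}. \] Then \[ \|B\|^{2}\leq m+C(G)\sum_{(i,j)\in E(G)}\phi_{ij},\qquad C(G)=\frac{2(m-1)}{\delta}-1, \] where the sum over $E(G)$ runs over each (unordered) edge once.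
   Context: $\|\cdot\|$ is the operator norm, $[a,b]=ab-ba$, $\{a,b\}=ab+ba$. A contraction is an operator of norm at most $1$. *)

theory Defs
  imports Complex_Main
begin

class chilbert = ab_group_add +
  fixes hscale :: "complex \<Rightarrow> 'a \<Rightarrow> 'a"
    and hinner :: "'a \<Rightarrow> 'a \<Rightarrow> complex"
  assumes hscale_add_right: "hscale c (x + y) = hscale c x + hscale c y"
    and hscale_add_left: "hscale (c + d) x = hscale c x + hscale d x"
    and hscale_hscale: "hscale c (hscale d x) = hscale (c * d) x"
    and hscale_one: "hscale 1 x = x"
    and hinner_conj: "hinner x y = cnj (hinner y x)"
    and hinner_add_right: "hinner x (y + z) = hinner x y + hinner x z"
    and hinner_scale_right: "hinner x (hscale c y) = c * hinner x y"
    and hinner_nonneg: "0 \<le> Re (hinner x x)"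
    and hinner_eq_zero: "hinner x x = 0 \<Longrightarrow> x = 0"
    and hcomplete:
      "(\<forall>e>0. \<exists>N. \<forall>p::nat\<ge>N. \<forall>q\<ge>N. sqrt (Re (hinner (X p - X q) (X p - X q))) < e)
        \<Longrightarrow> (\<exists>L. \<forall>e>0. \<exists>N. \<forall>n::nat\<ge>N. sqrt (Re (hinner (X n - L) (X n - L))) < e)"

definition hnorm :: "'a::chilbert \<Rightarrow> real" where
  "hnorm x = sqrt (Re (hinner x x))"

definition bounded_op :: "('a::chilbert \<Rightarrow> 'a) \<Rightarrow> bool" where
  "bounded_op T \<longleftrightarrow> (\<forall>x y. T (x + y) = T x + T y) \<and> (\<forall>c x. T (hscale c x) = hscale c (T x))
     \<and> (\<exists>C. \<forall>x. hnorm (T x) \<le> C * hnorm x)"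

definition opnorm :: "('a::chilbert \<Rightarrow> 'a) \<Rightarrow> real" where
  "opnorm T = Sup {hnorm (T x) | x. hnorm x \<le> 1}"

definition self_adjoint :: "('a::chilbert \<Rightarrow> 'a) \<Rightarrow> bool" where
  "self_adjoint T \<longleftrightarrow> (\<forall>x y. hinner (T x) y = hinner x (T y))"

definition contraction :: "('a::chilbert \<Rightarrow> 'a) \<Rightarrow> bool" where
  "contraction T \<longleftrightarrow> bounded_op T \<and> opnorm T \<le> 1"

definition commut :: "('a::chilbert \<Rightarrow> 'a) \<Rightarrow> ('a \<Rightarrow> 'a) \<Rightarrow> ('a \<Rightarrow> 'a)" where
  "commut S T = (\<lambda>v. S (T v) - T (S v))"

definition anticommut :: "('a::chilbert \<Rightarrow> 'a) \<Rightarrow> ('a \<Rightarrow> 'a) \<Rightarrow> ('a \<Rightarrow> 'a)" where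
  "anticommut S T = (\<lambda>v. S (T v) + T (S v))"

text \<open>The Hilbert tensor product H \<otimes> K is the completion of the algebraic tensor
product, on which \<langle>u\<otimes>v, u'\<otimes>v'\<rangle> = \<langle>u,u'\<rangle>\<langle>v,v'\<rangle>.  Since the algebraic tensor product
is dense and B is bounded, the operator norm of B equals the supremum of the norms
of B applied to finite sums \<xi> = \<Sigma>_{a<n} u_a \<otimes> v_a with norm at most 1.
We use this as the definition of the norm of B.\<close>

definition tensor_norm2 :: "(nat \<Rightarrow> 'a::chilbert) \<Rightarrow> (nat \<Rightarrow> 'b::chilbert) \<Rightarrow> nat \<Rightarrow> real" where
  "tensor_norm2 u v n = Re (\<Sum>a<n. \<Sum>b<n. hinner (u a) (u b) * hinner (v a) (v b))"

text \<open>Squared norm of (\<Sigma>_{i=1..m} x_i \<otimes> y_i)(\<Sigma>_{a<n} u_a \<otimes> v_a).\<close>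
definition tensor_op_image_norm2 ::
  "(nat \<Rightarrow> 'a::chilbert \<Rightarrow> 'a) \<Rightarrow> (nat \<Rightarrow> 'b::chilbert \<Rightarrow> 'b) \<Rightarrow> nat
     \<Rightarrow> (nat \<Rightarrow> 'a) \<Rightarrow> (nat \<Rightarrow> 'b) \<Rightarrow> nat \<Rightarrow> real" where
  "tensor_op_image_norm2 x y m u v n =
     Re (\<Sum>i\<in>{1..m}. \<Sum>j\<in>{1..m}. \<Sum>a<n. \<Sum>b<n.
           hinner (x i (u a)) (x j (u b)) * hinner (y i (v a)) (y j (v b)))"

definition tensor_sum_opnorm ::
  "(nat \<Rightarrow> 'a::chilbert \<Rightarrow> 'a) \<Rightarrow> (nat \<Rightarrow> 'b::chilbert \<Rightarrow> 'b) \<Rightarrow> nat \<Rightarrow> real" where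
  "tensor_sum_opnorm x y m =
     Sup {sqrt (tensor_op_image_norm2 x y m u v n) | u v n. tensor_norm2 u v n \<le> 1}"

definition phi :: "(nat \<Rightarrow> 'a::chilbert \<Rightarrow> 'a) \<Rightarrow> (nat \<Rightarrow> 'b::chilbert \<Rightarrow> 'b) \<Rightarrow> nat \<Rightarrow> nat \<Rightarrow> real" where
  "phi x y i j = (1/2) * (opnorm (commut (x i) (x j)) * opnorm (commut (y i) (y j))
                        + opnorm (anticommut (x i) (x j)) * opnorm (anticommut (y i) (y j)))"

definition simple_graph_on :: "nat \<Rightarrow> nat set set \<Rightarrow> bool" where
  "simple_graph_on m E \<longleftrightarrow> E \<subseteq> {{i, j} | i j. i \<in> {1..m} \<and> j \<in> {1..m} \<and> i \<noteq> j}"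

definition nbrs :: "nat set set \<Rightarrow> nat \<Rightarrow> nat set" where
  "nbrs E i = {j. {i, j} \<in> E}"

definition gdeg :: "nat set set \<Rightarrow> nat \<Rightarrow> nat" where
  "gdeg E i = card (nbrs E i)"

definition min_deg :: "nat \<Rightarrow> nat set set \<Rightarrow> nat" where
  "min_deg m E = Min (gdeg E ` {1..m})"

definition edge_pairs :: "nat \<Rightarrow> nat set set \<Rightarrow> (nat \<times> nat) set" where
  "edge_pairs m E = {(i, j). i \<in> {1..m} \<and> j \<in> {1..m} \<and> i < j \<and> {i, j} \<in> E}"

end

(*
  Write \<xi> = \<Sum>_a u_a \<otimes> v_a.  Expanding \<parallel>B\<xi>\<parallel>^2 = \<Sum>_{i,j} <x_i \<otimes> y_i \<xi>, x_j \<otimes> y_j \<xi>>,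
  each diagonal term is at most \<parallel>\<xi>\<parallel>^2, and for i < j the two terms (i,j), (j,i) together are
  the real part of <\<xi>, ([x_i,x_j] \<otimes> [y_i,y_j] + {x_i,x_j} \<otimes> {y_i,y_j}) \<xi>> / 2, which is at most
  \<phi>_ij \<parallel>\<xi>\<parallel>^2 by Cauchy-Schwarz in H \<otimes> K.  Positivity of the inner product on finite sums
  of elementary tensors is Schur's product theorem.  Thus \<parallel>B\<parallel>^2 \<le> m + \<Sum>_{i<j} \<phi>_ij.

  Counting how often each average occurs, the non-edge terms add up to at most
  \<Sum>_i (m - 1 - deg i) / deg i \<cdot> \<Sum>_{k \<in> N(i)} \<phi>_ik \<le> (m - 1 - \<delta>) / \<delta> \<cdot> 2 \<Sum>_E \<phi>,
  and adding the edge terms gives the constant 2 (m - 1) / \<delta> - 1.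
*)

theory Submission
  imports Defs
begin

lemma hscale_zero_right [simp]: "hscale c (0::'a::chilbert) = 0"
proof -
  have "hscale c (0 + 0) = hscale c 0 + hscale c (0::'a)" by (rule hscale_add_right)
  then show ?thesis by simp
qed

lemma hscale_minus_right: "hscale c (- x) = - hscale c x"
proof -
  have "hscale c (- x + x) = hscale c (- x) + hscale c x" by (rule hscale_add_right)
  then show ?thesis using eq_neg_iff_add_eq_0 by auto
qed

lemma hinner_zero_right [simp]: "hinner x (0::'a::chilbert) = 0"
proof -
  have "hinner x (0 + 0) = hinner x 0 + hinner x (0::'a)" by (rule hinner_add_right)
  then show ?thesis by simp
qed

lemma hinner_zero_left [simp]: "hinner 0 (x::'a::chilbert) = 0"
  using hinner_conj[of 0 x] by simp

lemma hinner_add_left: "hinner (x + y) z = hinner x z + hinner y z"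
proof -
  have "hinner (x + y) z = cnj (hinner z x) + cnj (hinner z y)"
    by (simp add: hinner_conj[of "x + y"] hinner_add_right)
  then show ?thesis by (simp flip: hinner_conj)
qed

lemma hinner_scale_left: "hinner (hscale c x) y = cnj c * hinner x y"
proof -
  have "hinner (hscale c x) y = cnj c * cnj (hinner y x)"
    by (simp add: hinner_conj[of "hscale c x"] hinner_scale_right)
  then show ?thesis by (simp flip: hinner_conj)
qed

lemma hinner_minus_right: "hinner x (- y) = - hinner x y"
proof -
  have "hinner x (- y + y) = hinner x (- y) + hinner x y" by (rule hinner_add_right)
  then show ?thesis using eq_neg_iff_add_eq_0 by auto
qed

lemma hinner_minus_left: "hinner (- x) y = - hinner x y"
  using hinner_conj[of "- x" y] hinner_conj[of x y] by (simp add: hinner_minus_right)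

lemma hinner_diff_right: "hinner x (y - z) = hinner x y - hinner x z"
  unfolding diff_conv_add_uminus hinner_add_right hinner_minus_right by simp

lemma hinner_diff_left: "hinner (x - y) z = hinner x z - hinner y z"
  unfolding diff_conv_add_uminus hinner_add_left hinner_minus_left by simp

lemma Im_hinner_self [simp]: "Im (hinner x x) = 0"
proof -
  have "Im (hinner x x) = Im (cnj (hinner x x))" using hinner_conj[of x x] by simp
  then show ?thesis by simp
qed

lemma hnorm_nonneg: "0 \<le> hnorm x"
  by (simp add: hnorm_def hinner_nonneg)

lemma power2_hnorm: "(hnorm x)\<^sup>2 = Re (hinner x x)"
  by (simp add: hnorm_def hinner_nonneg)

lemma hnorm_eq_zero_iff: "hnorm x = 0 \<longleftrightarrow> x = 0"
proof
  assume "hnorm x = 0"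
  then have "Re (hinner x x) = 0"
    unfolding hnorm_def using hinner_nonneg[of x] by simp
  then have "hinner x x = 0"
    by (simp add: complex_eq_iff)
  then show "x = 0" by (rule hinner_eq_zero)
qed (simp add: hnorm_def)

lemma hnorm_scale: "hnorm (hscale c x) = cmod c * hnorm x"
proof -
  have "hinner (hscale c x) (hscale c x) = (cnj c * c) * hinner x x"
    by (simp add: hinner_scale_left hinner_scale_right)
  also have "cnj c * c = complex_of_real ((cmod c)\<^sup>2)"
    by (simp only: complex_norm_square mult.commute)
  finally have "Re (hinner (hscale c x) (hscale c x)) = (cmod c)\<^sup>2 * Re (hinner x x)"
    by simp
  then show ?thesis unfolding hnorm_def by (simp add: real_sqrt_mult)
qed

lemma hnorm_minus: "hnorm (- x) = hnorm x"
  by (simp add: hnorm_def hinner_minus_left hinner_minus_right)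

lemma hnorm_parallelogram:
  "(hnorm (x + y))\<^sup>2 + (hnorm (x - y))\<^sup>2 = 2 * (hnorm x)\<^sup>2 + 2 * (hnorm y)\<^sup>2"
proof -
  have "hinner (x + y) (x + y) + hinner (x - y) (x - y) = 2 * hinner x x + 2 * hinner y y"
    by (simp add: hinner_add_left hinner_add_right hinner_diff_left hinner_diff_right algebra_simps)
  from arg_cong[OF this, of Re] show ?thesis
    by (simp add: power2_hnorm)
qed

lemma bounded_op_apply_add: "bounded_op T \<Longrightarrow> T (x + y) = T x + T y"
  by (simp add: bounded_op_def)

lemma bounded_op_apply_scale: "bounded_op T \<Longrightarrow> T (hscale c x) = hscale c (T x)"
  by (simp add: bounded_op_def)

lemma bounded_op_apply_zero: "bounded_op (T::'a::chilbert \<Rightarrow> 'a) \<Longrightarrow> T 0 = 0"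
  using bounded_op_apply_add[of T 0 0] by simp

lemma hnorm_apply_le_opnorm_of_le_1:
  assumes "bounded_op T" and "hnorm x \<le> 1"
  shows "hnorm (T x) \<le> opnorm T"
proof -
  obtain C where C: "\<And>x. hnorm (T x) \<le> C * hnorm x"
    using assms(1) unfolding bounded_op_def by blast
  have "hnorm (T z) \<le> max C 0" if "hnorm z \<le> 1" for z
  proof -
    have "C * hnorm z \<le> max C 0 * hnorm z" by (simp add: hnorm_nonneg mult_right_mono)
    also have "\<dots> \<le> max C 0" using that hnorm_nonneg[of z] by (simp add: mult_left_le)
    finally show ?thesis using C[of z] by simp
  qed
  then have "bdd_above {hnorm (T z) | z. hnorm z \<le> 1}"
    by (intro bdd_aboveI[of _ "max C 0"]) blast
  then show ?thesis
    unfolding opnorm_def using assms(2) by (intro cSup_upper) blast+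
qed

lemma opnorm_nonneg: "bounded_op T \<Longrightarrow> 0 \<le> opnorm T"
  using hnorm_apply_le_opnorm_of_le_1[of T 0] bounded_op_apply_zero[of T]
  by (simp add: hnorm_def)

lemma hnorm_apply_le_opnorm:
  assumes T: "bounded_op T"
  shows "hnorm (T x) \<le> opnorm T * hnorm x"
proof (cases "x = 0")
  case True
  then show ?thesis by (simp add: bounded_op_apply_zero[OF T] hnorm_def)
next
  case False
  define r where "r = hnorm x"
  have r: "r > 0"
    using False hnorm_eq_zero_iff[of x] hnorm_nonneg[of x] unfolding r_def by auto
  have cmod_r: "cmod (complex_of_real (1 / r)) = 1 / r"
    using r by (simp add: norm_divide)
  have "hnorm (T x) / r = hnorm (T (hscale (complex_of_real (1 / r)) x))"
    unfolding bounded_op_apply_scale[OF T] hnorm_scale cmod_r by simp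
  also have "\<dots> \<le> opnorm T"
    using r by (intro hnorm_apply_le_opnorm_of_le_1[OF T]) (simp only: hnorm_scale cmod_r, simp add: r_def)
  finally show ?thesis
    using r by (simp add: r_def field_simps)
qed

lemma bounded_op_comp:
  assumes S: "bounded_op S" and T: "bounded_op T"
  shows "bounded_op (\<lambda>v. S (T v))"
proof -
  have "hnorm (S (T v)) \<le> (opnorm S * opnorm T) * hnorm v" for v
  proof -
    have "hnorm (S (T v)) \<le> opnorm S * hnorm (T v)" by (rule hnorm_apply_le_opnorm[OF S])
    also have "\<dots> \<le> opnorm S * (opnorm T * hnorm v)"
      by (rule mult_left_mono[OF hnorm_apply_le_opnorm[OF T] opnorm_nonneg[OF S]])
    finally show ?thesis by (simp add: mult.assoc)
  qed
  then show ?thesis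
    using S T unfolding bounded_op_def by auto
qed

lemma bounded_op_uminus: "bounded_op T \<Longrightarrow> bounded_op (\<lambda>v. - T v)"
  unfolding bounded_op_def by (auto simp: hnorm_minus hscale_minus_right)

lemma bounded_op_add:
  assumes S: "bounded_op S" and T: "bounded_op T"
  shows "bounded_op (\<lambda>v. S v + T v)"
proof -
  define C where "C = sqrt (2 * (opnorm S)\<^sup>2 + 2 * (opnorm T)\<^sup>2)"
  have "hnorm (S v + T v) \<le> C * hnorm v" for v
  proof (rule power2_le_imp_le)
    have "(hnorm (S v + T v))\<^sup>2 \<le> 2 * (hnorm (S v))\<^sup>2 + 2 * (hnorm (T v))\<^sup>2"
      using hnorm_parallelogram[of "S v" "T v"] zero_le_power2[of "hnorm (S v - T v)"]
      by linarith
    also have "\<dots> \<le> 2 * (opnorm S * hnorm v)\<^sup>2 + 2 * (opnorm T * hnorm v)\<^sup>2"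
      using hnorm_apply_le_opnorm[OF S, of v] hnorm_apply_le_opnorm[OF T, of v]
      by (intro add_mono mult_left_mono power_mono) (simp_all add: hnorm_nonneg)
    also have "\<dots> = (C * hnorm v)\<^sup>2"
      by (simp add: C_def algebra_simps)
    finally show "(hnorm (S v + T v))\<^sup>2 \<le> (C * hnorm v)\<^sup>2" .
    show "0 \<le> C * hnorm v" by (simp add: C_def hnorm_nonneg)
  qed
  moreover have "S (x + y) + T (x + y) = (S x + T x) + (S y + T y)" for x y
    by (simp add: bounded_op_apply_add[OF S] bounded_op_apply_add[OF T] ac_simps)
  moreover have "S (hscale c x) + T (hscale c x) = hscale c (S x + T x)" for c x
    by (simp add: bounded_op_apply_scale[OF S] bounded_op_apply_scale[OF T] hscale_add_right)
  ultimately show ?thesis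
    unfolding bounded_op_def by blast
qed

lemma bounded_op_diff:
  assumes "bounded_op S" and "bounded_op T"
  shows "bounded_op (\<lambda>v. S v - T v)"
  using bounded_op_add[OF assms(1) bounded_op_uminus[OF assms(2)]] by (simp only: diff_conv_add_uminus)

lemma bounded_op_commut:
  assumes "bounded_op S" and "bounded_op T"
  shows "bounded_op (commut S T)"
  unfolding commut_def
  by (rule bounded_op_diff[OF bounded_op_comp[OF assms] bounded_op_comp[OF assms(2,1)]])

lemma bounded_op_anticommut:
  assumes "bounded_op S" and "bounded_op T"
  shows "bounded_op (anticommut S T)"
  unfolding anticommut_def
  by (rule bounded_op_add[OF bounded_op_comp[OF assms] bounded_op_comp[OF assms(2,1)]])

lemma opnorm_commut_swap: "opnorm (commut T S) = opnorm (commut S T)"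
proof -
  have "commut T S = (\<lambda>v. - commut S T v)" by (simp add: commut_def)
  then show ?thesis
    unfolding opnorm_def by (simp add: hnorm_minus)
qed

lemma anticommut_swap: "anticommut T S = anticommut S T"
  by (simp add: anticommut_def add.commute)

locale pos_sesquilinear =
  fixes p :: "'a::chilbert \<Rightarrow> 'a \<Rightarrow> complex"
  assumes add_left: "p (x + y) z = p x z + p y z"
    and scale_left: "p (hscale c x) z = cnj c * p x z"
    and add_right: "p x (y + z) = p x y + p x z"
    and scale_right: "p x (hscale c z) = c * p x z"
    and Re_self_nonneg: "0 \<le> Re (p x x)"
begin

lemma zero_left [simp]: "p 0 z = 0"
  using add_left[of 0 0 z] by simp

lemma zero_right [simp]: "p x 0 = 0"
  using add_right[of x 0 0] by simp

lemma sum_left: "p (sum f A) z = (\<Sum>a\<in>A. p (f a) z)"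
  by (induction A rule: infinite_finite_induct) (simp_all add: add_left)

lemma sum_right: "p x (sum f A) = (\<Sum>a\<in>A. p x (f a))"
  by (induction A rule: infinite_finite_induct) (simp_all add: add_right)

lemma linear_combination_self:
  "p (\<Sum>a\<in>A. hscale (\<alpha> a) (u a)) (\<Sum>b\<in>A. hscale (\<alpha> b) (u b))
     = (\<Sum>a\<in>A. \<Sum>b\<in>A. cnj (\<alpha> a) * \<alpha> b * p (u a) (u b))"
  by (simp add: sum_left sum_right scale_left scale_right sum_distrib_left)
    (subst sum.swap, simp add: ac_simps)

end

text \<open>The vector \<open>w' a\<close> is \<open>w a\<close> minus its orthogonal projection onto \<open>w c\<close>.\<close>

lemma hinner_remove_component:
  fixes w :: "'i \<Rightarrow> 'a::chilbert"
  obtains w' :: "'i \<Rightarrow> 'a" and \<alpha> :: "'i \<Rightarrow> complex" where "w' c = 0"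
    and "\<And>a b. hinner (w a) (w b) = hinner (w' a) (w' b) + cnj (\<alpha> a) * \<alpha> b * hinner (w c) (w c)"
proof (cases "w c = 0")
  case True
  then show ?thesis by (intro that[of w "\<lambda>_. 0"]) simp_all
next
  case False
  define z where "z = w c"
  define N where "N = hinner z z"
  have N: "N \<noteq> 0" using False hinner_eq_zero unfolding N_def z_def by blast
  define \<alpha> where "\<alpha> a = hinner z (w a) / N" for a
  define w' where "w' a = w a - hscale (\<alpha> a) z" for a
  have orth_right: "hinner z (w' b) = 0" for b
    using N by (simp add: w'_def \<alpha>_def N_def hinner_diff_right hinner_scale_right)
  have orth_left: "hinner (w' a) z = 0" for a
    using hinner_conj[of "w' a" z] orth_right[of a] by simp
  have w: "w a = w' a + hscale (\<alpha> a) z" for a by (simp add: w'_def)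
  show ?thesis
  proof (rule that)
    show "w' c = 0" using N by (simp add: w'_def \<alpha>_def N_def z_def hscale_one)
    show "hinner (w a) (w b) = hinner (w' a) (w' b) + cnj (\<alpha> a) * \<alpha> b * hinner (w c) (w c)" for a b
      unfolding w[of a] w[of b] z_def[symmetric] N_def[symmetric]
      by (simp add: hinner_add_left hinner_add_right hinner_scale_left hinner_scale_right
          orth_left orth_right N_def algebra_simps)
  qed
qed

text \<open>Schur's product theorem.  The induction splits off, one index at a time, a rank-one
  part of the Gram matrix of \<open>w\<close>.\<close>

theorem (in pos_sesquilinear) schur_product_nonneg:
  fixes u :: "'i \<Rightarrow> 'a" and w :: "'i \<Rightarrow> 'b::chilbert"
  assumes "finite I"
  shows "0 \<le> Re (\<Sum>a\<in>I. \<Sum>b\<in>I. p (u a) (u b) * hinner (w a) (w b))"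
  using assms
proof (induction I arbitrary: w rule: finite_induct)
  case empty
  then show ?case by simp
next
  case (insert c F)
  obtain w' :: "'i \<Rightarrow> 'b" and \<alpha> where w'c: "w' c = 0"
    and split: "\<And>a b. hinner (w a) (w b) = hinner (w' a) (w' b) + cnj (\<alpha> a) * \<alpha> b * hinner (w c) (w c)"
    using hinner_remove_component[where w = w and c = c] by blast
  define N where "N = hinner (w c) (w c)"
  define y where "y = (\<Sum>a\<in>insert c F. hscale (\<alpha> a) (u a))"
  have "p (u a) (u b) * hinner (w a) (w b)
      = p (u a) (u b) * hinner (w' a) (w' b) + N * (cnj (\<alpha> a) * \<alpha> b * p (u a) (u b))" for a b
    unfolding split[of a b] N_def by (simp add: algebra_simps)
  then have "(\<Sum>a\<in>insert c F. \<Sum>b\<in>insert c F. p (u a) (u b) * hinner (w a) (w b))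
      = (\<Sum>a\<in>insert c F. \<Sum>b\<in>insert c F. p (u a) (u b) * hinner (w' a) (w' b))
        + N * p y y"
    by (simp add: sum.distrib sum_distrib_left y_def linear_combination_self)
  also have "(\<Sum>a\<in>insert c F. \<Sum>b\<in>insert c F. p (u a) (u b) * hinner (w' a) (w' b))
      = (\<Sum>a\<in>F. \<Sum>b\<in>F. p (u a) (u b) * hinner (w' a) (w' b))"
    using insert.hyps by (simp add: w'c)
  finally have "Re (\<Sum>a\<in>insert c F. \<Sum>b\<in>insert c F. p (u a) (u b) * hinner (w a) (w b))
      = Re (\<Sum>a\<in>F. \<Sum>b\<in>F. p (u a) (u b) * hinner (w' a) (w' b))
        + Re N * Re (p y y)"
    by (simp add: N_def)
  moreover have "0 \<le> Re N * Re (p y y)"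
    unfolding N_def by (intro mult_nonneg_nonneg hinner_nonneg Re_self_nonneg)
  ultimately show ?case
    using insert.IH[of w'] by linarith
qed

lemma pos_sesquilinear_hinner: "pos_sesquilinear hinner"
  by unfold_locales
    (simp_all add: hinner_add_left hinner_scale_left hinner_add_right hinner_scale_right hinner_nonneg)

text \<open>\<open>tensor_inner I u v u' v'\<close> is the inner product of \<open>\<Sum>a\<in>I. u a \<otimes> v a\<close> and
  \<open>\<Sum>b\<in>I. u' b \<otimes> v' b\<close> in the tensor product of the two Hilbert spaces.\<close>

definition tensor_inner ::
  "'i set \<Rightarrow> ('i \<Rightarrow> 'a::chilbert) \<Rightarrow> ('i \<Rightarrow> 'b::chilbert) \<Rightarrow> ('i \<Rightarrow> 'a) \<Rightarrow> ('i \<Rightarrow> 'b) \<Rightarrow> complex"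
  where "tensor_inner I u v u' v' = (\<Sum>a\<in>I. \<Sum>b\<in>I. hinner (u a) (u' b) * hinner (v a) (v' b))"

lemma tensor_norm2_eq: "tensor_norm2 u v n = Re (tensor_inner {..<n} u v u v)"
  by (simp add: tensor_norm2_def tensor_inner_def)

lemma tensor_inner_self_nonneg: "finite I \<Longrightarrow> 0 \<le> Re (tensor_inner I u v u v)"
  unfolding tensor_inner_def
  by (rule pos_sesquilinear.schur_product_nonneg[OF pos_sesquilinear_hinner])

lemma tensor_inner_commute: "tensor_inner I u' v' u v = cnj (tensor_inner I u v u' v')"
  unfolding tensor_inner_def by (simp add: cnj_sum flip: hinner_conj) (rule sum.swap)

lemma tensor_norm_map_left_le:
  assumes S: "bounded_op S" and I: "finite I"
  shows "Re (tensor_inner I (S \<circ> u) w (S \<circ> u) w) \<le> (opnorm S)\<^sup>2 * Re (tensor_inner I u w u w)"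
proof -
  define r where "r = (opnorm S)\<^sup>2"
  define p where "p x y = complex_of_real r * hinner x y - hinner (S x) (S y)" for x y
  have "pos_sesquilinear p"
  proof unfold_locales
    show "0 \<le> Re (p z z)" for z
    proof -
      have "(hnorm (S z))\<^sup>2 \<le> (opnorm S * hnorm z)\<^sup>2"
        using hnorm_apply_le_opnorm[OF S] hnorm_nonneg by (intro power_mono) auto
      then show ?thesis by (simp add: p_def r_def power2_hnorm power_mult_distrib)
    qed
  qed (simp_all add: p_def hinner_add_left hinner_add_right hinner_scale_left hinner_scale_right
      bounded_op_apply_add[OF S] bounded_op_apply_scale[OF S] algebra_simps)
  then have "0 \<le> Re (\<Sum>a\<in>I. \<Sum>b\<in>I. p (u a) (u b) * hinner (w a) (w b))"
    using I by (rule pos_sesquilinear.schur_product_nonneg)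
  also have "(\<Sum>a\<in>I. \<Sum>b\<in>I. p (u a) (u b) * hinner (w a) (w b))
      = complex_of_real r * tensor_inner I u w u w - tensor_inner I (S \<circ> u) w (S \<circ> u) w"
    by (simp add: p_def tensor_inner_def sum_distrib_left sum_subtractf left_diff_distrib mult.assoc)
  finally show ?thesis by (simp add: r_def)
qed

lemma tensor_norm_map_le:
  assumes S: "bounded_op S" and T: "bounded_op T" and I: "finite I"
  shows "Re (tensor_inner I (S \<circ> u) (T \<circ> v) (S \<circ> u) (T \<circ> v))
    \<le> (opnorm S * opnorm T)\<^sup>2 * Re (tensor_inner I u v u v)"
proof -
  have swap: "tensor_inner I v u v' u' = tensor_inner I u v u' v'" for u v u' v'
    by (simp add: tensor_inner_def mult.commute)
  have "Re (tensor_inner I (S \<circ> u) (T \<circ> v) (S \<circ> u) (T \<circ> v))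
      \<le> (opnorm S)\<^sup>2 * Re (tensor_inner I u (T \<circ> v) u (T \<circ> v))"
    by (rule tensor_norm_map_left_le[OF S I])
  also have "Re (tensor_inner I u (T \<circ> v) u (T \<circ> v)) \<le> (opnorm T)\<^sup>2 * Re (tensor_inner I u v u v)"
    using tensor_norm_map_left_le[OF T I, of v u]
    by (simp only: swap[of u "T \<circ> v" u "T \<circ> v"] swap[of u v u v])
  finally show ?thesis
    by (simp add: power_mult_distrib mult.assoc mult_left_mono)
qed

lemma quadratic_nonneg_imp_le_sqrt:
  fixes a b c :: real
  assumes quadratic: "\<And>s. 0 \<le> s\<^sup>2 * a - 2 * s * b + c" and "0 \<le> a"
  shows "b \<le> sqrt (a * c)"
proof -
  have "b\<^sup>2 \<le> a * c"
  proof (cases "a = 0")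
    case True
    have "b = 0"
    proof (rule ccontr)
      assume "b \<noteq> 0"
      then show False
        using quadratic[of "(c + 1) / (2 * b)"] True by (simp add: field_simps)
    qed
    then show ?thesis using True quadratic[of 0] by simp
  next
    case False
    then have "0 < a" using \<open>0 \<le> a\<close> by simp
    then show ?thesis
      using quadratic[of "b / a"] by (simp add: field_simps power2_eq_square)
  qed
  then have "sqrt (b\<^sup>2) \<le> sqrt (a * c)" by (rule real_sqrt_le_mono)
  then show ?thesis by simp
qed

lemma tensor_inner_cauchy_schwarz:
  assumes I: "finite I"
  shows "Re (tensor_inner I u v u' v')
    \<le> sqrt (Re (tensor_inner I u v u v) * Re (tensor_inner I u' v' u' v'))"
proof (rule quadratic_nonneg_imp_le_sqrt)
  show "0 \<le> Re (tensor_inner I u v u v)" by (rule tensor_inner_self_nonneg[OF I])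
  fix s :: real
  \<comment> \<open>Indexing by \<open>I \<times> UNIV\<close> writes \<open>s \<xi> - \<xi>'\<close> as a single sum of elementary tensors.\<close>
  define U where "U z = (if snd z then hscale (complex_of_real s) (u (fst z)) else - u' (fst z))" for z
  define W where "W z = (if snd z then v (fst z) else v' (fst z))" for z
  have sum_pairs: "sum f (I \<times> UNIV) = (\<Sum>a\<in>I. f (a, True) + f (a, False))" for f :: "_ \<Rightarrow> complex"
  proof -
    have "sum f (I \<times> UNIV) = (\<Sum>a\<in>I. \<Sum>\<beta>\<in>UNIV. f (a, \<beta>))"
      by (simp add: sum.cartesian_product)
    then show ?thesis by (simp add: UNIV_bool add.commute)
  qed
  have "0 \<le> Re (tensor_inner (I \<times> UNIV) U W U W)"
    using I by (intro tensor_inner_self_nonneg) simp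
  also have "tensor_inner (I \<times> UNIV) U W U W
      = complex_of_real (s\<^sup>2) * tensor_inner I u v u v
        - complex_of_real s * (tensor_inner I u v u' v' + tensor_inner I u' v' u v)
        + tensor_inner I u' v' u' v'"
    unfolding tensor_inner_def sum_pairs U_def W_def
    by (simp add: hinner_scale_left hinner_scale_right hinner_minus_left hinner_minus_right
        sum.distrib sum_distrib_left sum_subtractf sum_negf power2_eq_square algebra_simps)
  finally show "0 \<le> s\<^sup>2 * Re (tensor_inner I u v u v) - 2 * s * Re (tensor_inner I u v u' v')
      + Re (tensor_inner I u' v' u' v')"
    by (simp add: tensor_inner_commute[of I u' v' u v])
qed

lemma tensor_inner_map_le:
  assumes S: "bounded_op S" and T: "bounded_op T" and I: "finite I"
  shows "Re (tensor_inner I u v (S \<circ> u) (T \<circ> v)) \<le> opnorm S * opnorm T * Re (tensor_inner I u v u v)"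
proof -
  define c where "c = opnorm S * opnorm T"
  define Q where "Q = Re (tensor_inner I u v u v)"
  have "0 \<le> c" using opnorm_nonneg[OF S] opnorm_nonneg[OF T] by (simp add: c_def)
  have "0 \<le> Q" unfolding Q_def by (rule tensor_inner_self_nonneg[OF I])
  have "Re (tensor_inner I u v (S \<circ> u) (T \<circ> v))
      \<le> sqrt (Q * Re (tensor_inner I (S \<circ> u) (T \<circ> v) (S \<circ> u) (T \<circ> v)))"
    unfolding Q_def by (rule tensor_inner_cauchy_schwarz[OF I])
  also have "\<dots> \<le> sqrt (Q * (c\<^sup>2 * Q))"
    using tensor_norm_map_le[OF S T I, of u v] \<open>0 \<le> Q\<close>
    by (intro real_sqrt_le_mono mult_left_mono) (simp_all add: c_def Q_def)
  also have "\<dots> = c * Q"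
    using \<open>0 \<le> c\<close> \<open>0 \<le> Q\<close> by (simp add: real_sqrt_mult power2_eq_square)
  finally show ?thesis by (simp add: c_def Q_def)
qed

lemma sum_upper_pairs:
  fixes f :: "'i::linorder \<Rightarrow> 'i \<Rightarrow> 'c::comm_monoid_add"
  assumes V: "finite V" and R: "\<And>i j. R i j \<longleftrightarrow> R j i"
  shows "(\<Sum>(i, j)\<in>{(i, j). i \<in> V \<and> j \<in> V \<and> i < j \<and> R i j}. f i j + f j i)
       = (\<Sum>i\<in>V. \<Sum>j\<in>{j\<in>V. j \<noteq> i \<and> R i j}. f i j)"
proof -
  define U where "U = {(i, j). i \<in> V \<and> j \<in> V \<and> i < j \<and> R i j}"
  have fin: "finite U"
    unfolding U_def by (rule finite_subset[of _ "V \<times> V"]) (use V in auto)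
  have ordered: "Sigma V (\<lambda>i. {j\<in>V. j \<noteq> i \<and> R i j}) = U \<union> prod.swap ` U"
    using R by (auto simp: U_def neq_iff)
  have disjoint: "U \<inter> prod.swap ` U = {}"
    by (auto simp: U_def)
  have "(\<Sum>i\<in>V. \<Sum>j\<in>{j\<in>V. j \<noteq> i \<and> R i j}. f i j) = (\<Sum>(i, j)\<in>U \<union> prod.swap ` U. f i j)"
    unfolding ordered[symmetric] using V by (subst sum.Sigma) auto
  also have "\<dots> = (\<Sum>(i, j)\<in>U. f i j) + (\<Sum>(i, j)\<in>prod.swap ` U. f i j)"
    using fin disjoint by (intro sum.union_disjoint) auto
  also have "(\<Sum>(i, j)\<in>prod.swap ` U. f i j) = (\<Sum>(i, j)\<in>U. f j i)"
    by (simp add: sum.reindex case_prod_beta)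
  finally show ?thesis
    unfolding U_def[symmetric] by (simp add: sum.distrib case_prod_beta)
qed

lemma sum_square_diag_upper:
  fixes f :: "'i::linorder \<Rightarrow> 'i \<Rightarrow> 'c::comm_monoid_add"
  assumes V: "finite V"
  shows "(\<Sum>i\<in>V. \<Sum>j\<in>V. f i j)
       = (\<Sum>i\<in>V. f i i) + (\<Sum>(i, j)\<in>{(i, j). i \<in> V \<and> j \<in> V \<and> i < j}. f i j + f j i)"
proof -
  have "(\<Sum>j\<in>V. f i j) = f i i + (\<Sum>j\<in>{j\<in>V. j \<noteq> i}. f i j)" if "i \<in> V" for i
  proof -
    have "{j\<in>V. j \<noteq> i} = V - {i}" by auto
    then show ?thesis using sum.remove[OF V that, of "f i"] by simp
  qed
  then have "(\<Sum>i\<in>V. \<Sum>j\<in>V. f i j) = (\<Sum>i\<in>V. f i i) + (\<Sum>i\<in>V. \<Sum>j\<in>{j\<in>V. j \<noteq> i}. f i j)"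
    by (simp add: sum.distrib)
  also have "(\<Sum>i\<in>V. \<Sum>j\<in>{j\<in>V. j \<noteq> i}. f i j)
      = (\<Sum>(i, j)\<in>{(i, j). i \<in> V \<and> j \<in> V \<and> i < j}. f i j + f j i)"
    using sum_upper_pairs[OF V, of "\<lambda>_ _. True" f] by simp
  finally show ?thesis .
qed

text \<open>The identity behind \<open>phi\<close>:
  \<open>x\<^sub>i x\<^sub>j \<otimes> y\<^sub>i y\<^sub>j + x\<^sub>j x\<^sub>i \<otimes> y\<^sub>j y\<^sub>i = ([x\<^sub>i,x\<^sub>j] \<otimes> [y\<^sub>i,y\<^sub>j] + {x\<^sub>i,x\<^sub>j} \<otimes> {y\<^sub>i,y\<^sub>j}) / 2\<close>.\<close>

lemma tensor_inner_pair_le_phi: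
  assumes x: "self_adjoint (x i)" "self_adjoint (x j)" "bounded_op (x i)" "bounded_op (x j)"
    and y: "self_adjoint (y i)" "self_adjoint (y j)" "bounded_op (y i)" "bounded_op (y j)"
    and I: "finite I"
  shows "Re (tensor_inner I (x i \<circ> u) (y i \<circ> v) (x j \<circ> u) (y j \<circ> v)
           + tensor_inner I (x j \<circ> u) (y j \<circ> v) (x i \<circ> u) (y i \<circ> v))
    \<le> phi x y i j * Re (tensor_inner I u v u v)"
proof -
  define C where "C = tensor_inner I u v (commut (x i) (x j) \<circ> u) (commut (y i) (y j) \<circ> v)"
  define A where "A = tensor_inner I u v (anticommut (x i) (x j) \<circ> u) (anticommut (y i) (y j) \<circ> v)"
  define Q where "Q = Re (tensor_inner I u v u v)"
  have adj: "hinner (x i p) q = hinner p (x i q)" "hinner (x j p) q = hinner p (x j q)"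
    "hinner (y i p') q' = hinner p' (y i q')" "hinner (y j p') q' = hinner p' (y j q')" for p q p' q'
    using x(1,2) y(1,2) unfolding self_adjoint_def by blast+
  have "C + A = 2 * (tensor_inner I (x i \<circ> u) (y i \<circ> v) (x j \<circ> u) (y j \<circ> v)
                   + tensor_inner I (x j \<circ> u) (y j \<circ> v) (x i \<circ> u) (y i \<circ> v))"
    unfolding C_def A_def tensor_inner_def comp_apply adj commut_def anticommut_def
      hinner_diff_right hinner_add_right
    by (simp add: sum.distrib[symmetric] sum_distrib_left algebra_simps)
  then have "Re (tensor_inner I (x i \<circ> u) (y i \<circ> v) (x j \<circ> u) (y j \<circ> v)
           + tensor_inner I (x j \<circ> u) (y j \<circ> v) (x i \<circ> u) (y i \<circ> v)) = (Re C + Re A) / 2"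
    by (simp add: complex_eq_iff)
  also have "\<dots> \<le> (opnorm (commut (x i) (x j)) * opnorm (commut (y i) (y j)) * Q
                  + opnorm (anticommut (x i) (x j)) * opnorm (anticommut (y i) (y j)) * Q) / 2"
    unfolding C_def A_def Q_def using x y I
    by (intro divide_right_mono add_mono tensor_inner_map_le bounded_op_commut
        bounded_op_anticommut) simp_all
  also have "\<dots> = phi x y i j * Q"
    by (simp add: phi_def algebra_simps)
  finally show ?thesis unfolding Q_def .
qed


lemma phi_commute: "phi x y j i = phi x y i j"
  by (simp add: phi_def opnorm_commut_swap anticommut_swap)

lemma phi_nonneg:
  assumes "bounded_op (x i)" "bounded_op (x j)" "bounded_op (y i)" "bounded_op (y j)"
  shows "0 \<le> phi x y i j"
  unfolding phi_def using assms
  by (intro mult_nonneg_nonneg add_nonneg_nonneg opnorm_nonneg bounded_op_commut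
      bounded_op_anticommut) simp_all

lemma tensor_op_image_norm2_le:
  fixes x :: "nat \<Rightarrow> 'h::chilbert \<Rightarrow> 'h" and y :: "nat \<Rightarrow> 'k::chilbert \<Rightarrow> 'k"
  assumes x_sa: "\<forall>i\<in>{1..m}. self_adjoint (x i) \<and> contraction (x i)"
    and y_sa: "\<forall>i\<in>{1..m}. self_adjoint (y i) \<and> contraction (y i)"
  shows "tensor_op_image_norm2 x y m u v n
    \<le> (real m + (\<Sum>(i, j)\<in>{(i, j). i \<in> {1..m} \<and> j \<in> {1..m} \<and> i < j}. phi x y i j))
       * tensor_norm2 u v n"
proof -
  define F where "F i j = tensor_inner {..<n} (x i \<circ> u) (y i \<circ> v) (x j \<circ> u) (y j \<circ> v)" for i j
  define Q where "Q = tensor_norm2 u v n"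
  have "0 \<le> Q"
    unfolding Q_def tensor_norm2_eq by (rule tensor_inner_self_nonneg) simp
  have x: "self_adjoint (x i)" "bounded_op (x i)" "opnorm (x i) \<le> 1" if "i \<in> {1..m}" for i
    using x_sa that by (auto simp: contraction_def)
  have y: "self_adjoint (y i)" "bounded_op (y i)" "opnorm (y i) \<le> 1" if "i \<in> {1..m}" for i
    using y_sa that by (auto simp: contraction_def)
  have diag: "Re (F i i) \<le> Q" if i: "i \<in> {1..m}" for i
  proof -
    have "Re (F i i) \<le> (opnorm (x i) * opnorm (y i))\<^sup>2 * Q"
      unfolding F_def Q_def tensor_norm2_eq
      by (rule tensor_norm_map_le) (simp_all add: x(2)[OF i] y(2)[OF i])
    also have "\<dots> \<le> Q"
      using x(3)[OF i] y(3)[OF i] opnorm_nonneg[OF x(2)[OF i]] opnorm_nonneg[OF y(2)[OF i]] \<open>0 \<le> Q\<close>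
      by (intro mult_left_le_one_le power_le_one mult_le_one) simp_all
    finally show ?thesis .
  qed
  have pair: "Re (F i j + F j i) \<le> phi x y i j * Q" if "i \<in> {1..m}" "j \<in> {1..m}" for i j
    unfolding F_def Q_def tensor_norm2_eq
    using x[OF that(1)] x[OF that(2)] y[OF that(1)] y[OF that(2)]
    by (intro tensor_inner_pair_le_phi) simp_all
  have "tensor_op_image_norm2 x y m u v n = Re (\<Sum>i\<in>{1..m}. \<Sum>j\<in>{1..m}. F i j)"
    by (simp add: tensor_op_image_norm2_def F_def tensor_inner_def)
  also have "\<dots> = (\<Sum>i\<in>{1..m}. Re (F i i))
      + (\<Sum>(i, j)\<in>{(i, j). i \<in> {1..m} \<and> j \<in> {1..m} \<and> i < j}. Re (F i j + F j i))"
    by (simp add: sum_square_diag_upper[OF finite_atLeastAtMost] case_prod_beta)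
  also have "\<dots> \<le> (\<Sum>i\<in>{1..m}. Q)
      + (\<Sum>(i, j)\<in>{(i, j). i \<in> {1..m} \<and> j \<in> {1..m} \<and> i < j}. phi x y i j * Q)"
    using diag pair by (intro add_mono sum_mono) auto
  also have "\<dots> = (real m + (\<Sum>(i, j)\<in>{(i, j). i \<in> {1..m} \<and> j \<in> {1..m} \<and> i < j}. phi x y i j)) * Q"
    by (simp add: sum_distrib_right split_def distrib_right)
  finally show ?thesis
    unfolding Q_def .
qed

lemma simple_graph_on_edgeD:
  assumes "simple_graph_on m E" and "{i, j} \<in> E"
  shows "i \<in> {1..m} \<and> j \<in> {1..m} \<and> i \<noteq> j"
  using assms unfolding simple_graph_on_def by (auto simp: doubleton_eq_iff)

lemma nbrs_eq:
  assumes "simple_graph_on m E"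
  shows "nbrs E i = {j \<in> {1..m}. j \<noteq> i \<and> {i, j} \<in> E}"
  using simple_graph_on_edgeD[OF assms] by (auto simp: nbrs_def)

lemma card_non_nbrs:
  assumes G: "simple_graph_on m E" and i: "i \<in> {1..m}"
  shows "real (card {j \<in> {1..m}. j \<noteq> i \<and> {i, j} \<notin> E}) = real m - 1 - real (gdeg E i)"
proof -
  have non_nbrs: "{j \<in> {1..m}. j \<noteq> i \<and> {i, j} \<notin> E} = ({1..m} - {i}) - nbrs E i"
    by (auto simp: nbrs_eq[OF G])
  have sub: "nbrs E i \<subseteq> {1..m} - {i}"
    by (auto simp: nbrs_eq[OF G])
  have "card (nbrs E i) + 1 \<le> m"
    using card_mono[OF _ sub] i by fastforce
  moreover have "card {j \<in> {1..m}. j \<noteq> i \<and> {i, j} \<notin> E} = (m - 1) - card (nbrs E i)"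
    unfolding non_nbrs using sub i by (simp add: card_Diff_subset finite_subset)
  ultimately show ?thesis
    by (simp add: gdeg_def of_nat_diff)
qed

lemma min_deg_le_gdeg: "i \<in> {1..m} \<Longrightarrow> min_deg m E \<le> gdeg E i"
  by (simp add: min_deg_def)

lemma sum_nbrs_eq_twice_edge_sum:
  fixes \<phi> :: "nat \<Rightarrow> nat \<Rightarrow> 'c::comm_semiring_1"
  assumes G: "simple_graph_on m E" and sym: "\<And>i j. \<phi> j i = \<phi> i j"
  shows "(\<Sum>i\<in>{1..m}. \<Sum>k\<in>nbrs E i. \<phi> i k) = 2 * (\<Sum>(i, j)\<in>edge_pairs m E. \<phi> i j)"
proof -
  have "(\<Sum>(i, j)\<in>edge_pairs m E. \<phi> i j + \<phi> j i) = (\<Sum>i\<in>{1..m}. \<Sum>k\<in>nbrs E i. \<phi> i k)"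
    unfolding edge_pairs_def nbrs_eq[OF G]
    by (rule sum_upper_pairs[of "{1..m}" "\<lambda>i j. {i, j} \<in> E"]) (auto simp: insert_commute)
  then show ?thesis
    by (simp add: sym sum_distrib_left case_prod_beta mult_2)
qed

lemma sum_non_edges_le:
  fixes \<phi> :: "nat \<Rightarrow> nat \<Rightarrow> real"
  assumes G: "simple_graph_on m E" and delta: "min_deg m E \<ge> 1"
    and cond: "\<forall>i\<in>{1..m}. \<forall>j\<in>{1..m}. i \<noteq> j \<and> {i, j} \<notin> E \<longrightarrow>
         \<phi> i j \<le> (1 / real (gdeg E i)) * (\<Sum>k\<in>nbrs E i. \<phi> i k)
                + (1 / real (gdeg E j)) * (\<Sum>k\<in>nbrs E j. \<phi> j k)"
    and nonneg: "\<And>i j. i \<in> {1..m} \<Longrightarrow> j \<in> {1..m} \<Longrightarrow> 0 \<le> \<phi> i j"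
  shows "(\<Sum>(i, j)\<in>{(i, j). i \<in> {1..m} \<and> j \<in> {1..m} \<and> i < j \<and> {i, j} \<notin> E}. \<phi> i j)
    \<le> (real m - 1 - real (min_deg m E)) / real (min_deg m E) * (\<Sum>i\<in>{1..m}. \<Sum>k\<in>nbrs E i. \<phi> i k)"
proof -
  define \<delta> where "\<delta> = real (min_deg m E)"
  define S where "S i = (\<Sum>k\<in>nbrs E i. \<phi> i k)" for i
  define A where "A i = S i / real (gdeg E i)" for i
  have "(\<Sum>(i, j)\<in>{(i, j). i \<in> {1..m} \<and> j \<in> {1..m} \<and> i < j \<and> {i, j} \<notin> E}. \<phi> i j)
      \<le> (\<Sum>(i, j)\<in>{(i, j). i \<in> {1..m} \<and> j \<in> {1..m} \<and> i < j \<and> {i, j} \<notin> E}. A i + A j)"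
    using cond by (intro sum_mono) (auto simp: A_def S_def)
  also have "\<dots> = (\<Sum>i\<in>{1..m}. \<Sum>j\<in>{j \<in> {1..m}. j \<noteq> i \<and> {i, j} \<notin> E}. A i)"
    by (rule sum_upper_pairs[of "{1..m}" "\<lambda>i j. {i, j} \<notin> E"]) (auto simp: insert_commute)
  also have "\<dots> = (\<Sum>i\<in>{1..m}. S i * ((real m - 1 - real (gdeg E i)) / real (gdeg E i)))"
    by (intro sum.cong refl) (simp only: sum_constant card_non_nbrs[OF G] A_def, simp)
  also have "\<dots> \<le> (\<Sum>i\<in>{1..m}. S i * ((real m - 1 - \<delta>) / \<delta>))"
  proof (intro sum_mono mult_left_mono)
    fix i assume i: "i \<in> {1..m}"
    have "1 \<le> \<delta>" "\<delta> \<le> real (gdeg E i)"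
      using delta min_deg_le_gdeg[OF i] by (simp_all add: \<delta>_def)
    moreover from this have "(real m - 1) / real (gdeg E i) \<le> (real m - 1) / \<delta>"
      using i by (intro divide_left_mono) auto
    ultimately show "(real m - 1 - real (gdeg E i)) / real (gdeg E i) \<le> (real m - 1 - \<delta>) / \<delta>"
      by (simp add: diff_divide_distrib)
    show "0 \<le> S i"
      using nonneg i by (auto simp: S_def nbrs_eq[OF G] intro!: sum_nonneg)
  qed
  also have "\<dots> = (real m - 1 - \<delta>) / \<delta> * (\<Sum>i\<in>{1..m}. S i)"
    by (simp only: sum_distrib_right mult.commute)
  finally show ?thesis
    by (simp only: \<delta>_def S_def)
qed

lemma pair_sum_le_edge_sum:
  fixes \<phi> :: "nat \<Rightarrow> nat \<Rightarrow> real"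
  assumes G: "simple_graph_on m E" and delta: "min_deg m E \<ge> 1"
    and cond: "\<forall>i\<in>{1..m}. \<forall>j\<in>{1..m}. i \<noteq> j \<and> {i, j} \<notin> E \<longrightarrow>
         \<phi> i j \<le> (1 / real (gdeg E i)) * (\<Sum>k\<in>nbrs E i. \<phi> i k)
                + (1 / real (gdeg E j)) * (\<Sum>k\<in>nbrs E j. \<phi> j k)"
    and nonneg: "\<And>i j. i \<in> {1..m} \<Longrightarrow> j \<in> {1..m} \<Longrightarrow> 0 \<le> \<phi> i j"
    and sym: "\<And>i j. \<phi> j i = \<phi> i j"
  shows "(\<Sum>(i, j)\<in>{(i, j). i \<in> {1..m} \<and> j \<in> {1..m} \<and> i < j}. \<phi> i j)
    \<le> (2 * (real m - 1) / real (min_deg m E) - 1) * (\<Sum>(i, j)\<in>edge_pairs m E. \<phi> i j)"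
proof -
  define \<delta> where "\<delta> = real (min_deg m E)"
  define ND where "ND = {(i, j). i \<in> {1..m} \<and> j \<in> {1..m} \<and> i < j \<and> {i, j} \<notin> E}"
  have "{(i, j). i \<in> {1..m} \<and> j \<in> {1..m} \<and> i < j} = edge_pairs m E \<union> ND"
    by (auto simp: edge_pairs_def ND_def)
  moreover have "finite (edge_pairs m E)" "finite ND" "edge_pairs m E \<inter> ND = {}"
    by (auto simp: edge_pairs_def ND_def intro: finite_subset[of _ "{1..m} \<times> {1..m}"])
  ultimately have "(\<Sum>(i, j)\<in>{(i, j). i \<in> {1..m} \<and> j \<in> {1..m} \<and> i < j}. \<phi> i j)
      = (\<Sum>(i, j)\<in>edge_pairs m E. \<phi> i j) + (\<Sum>(i, j)\<in>ND. \<phi> i j)"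
    by (simp add: sum.union_disjoint)
  also have "(\<Sum>(i, j)\<in>ND. \<phi> i j) \<le> (real m - 1 - \<delta>) / \<delta> * (2 * (\<Sum>(i, j)\<in>edge_pairs m E. \<phi> i j))"
    using sum_non_edges_le[OF G delta cond nonneg] sum_nbrs_eq_twice_edge_sum[OF G sym]
    by (simp add: ND_def \<delta>_def)
  also have "(\<Sum>(i, j)\<in>edge_pairs m E. \<phi> i j) + \<dots>
      = (2 * (real m - 1) / \<delta> - 1) * (\<Sum>(i, j)\<in>edge_pairs m E. \<phi> i j)"
    using delta by (simp add: \<delta>_def field_simps)
  finally show ?thesis by (simp add: \<delta>_def)
qed

lemma tensor_sum_opnorm_sq_le:
  assumes bound: "\<And>u v n. tensor_norm2 u v n \<le> 1 \<Longrightarrow> tensor_op_image_norm2 x y m u v n \<le> R"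
  shows "(tensor_sum_opnorm x y m)\<^sup>2 \<le> R"
proof -
  define Z where "Z = {sqrt (tensor_op_image_norm2 x y m u v n) | u v n. tensor_norm2 u v n \<le> 1}"
  have empty_sum: "tensor_norm2 u v 0 \<le> 1" "tensor_op_image_norm2 x y m u v 0 = 0" for u v
    by (simp_all add: tensor_norm2_def tensor_op_image_norm2_def)
  then have "0 \<in> Z" unfolding Z_def by force
  have "0 \<le> R" using bound empty_sum by metis
  have le: "z \<le> sqrt R" if "z \<in> Z" for z
    using that bound unfolding Z_def by (auto intro: real_sqrt_le_mono)
  have "tensor_sum_opnorm x y m \<le> sqrt R"
    unfolding tensor_sum_opnorm_def Z_def[symmetric] using \<open>0 \<in> Z\<close> le by (intro cSup_least) auto
  moreover have "0 \<le> tensor_sum_opnorm x y m"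
    unfolding tensor_sum_opnorm_def Z_def[symmetric] using \<open>0 \<in> Z\<close> le
    by (intro cSup_upper bdd_aboveI[of _ "sqrt R"]) auto
  ultimately have "(tensor_sum_opnorm x y m)\<^sup>2 \<le> (sqrt R)\<^sup>2"
    by (intro power_mono)
  then show ?thesis using \<open>0 \<le> R\<close> by simp
qed


theorem theorem2p2:
  fixes x :: "nat \<Rightarrow> 'h::chilbert \<Rightarrow> 'h"
    and y :: "nat \<Rightarrow> 'k::chilbert \<Rightarrow> 'k"
    and m :: nat
    and E :: "nat set set"
  assumes m2: "m \<ge> 2"
    and x_sa: "\<forall>i\<in>{1..m}. self_adjoint (x i) \<and> contraction (x i)"
    and y_sa: "\<forall>i\<in>{1..m}. self_adjoint (y i) \<and> contraction (y i)"
    and G: "simple_graph_on m E"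
    and delta: "min_deg m E \<ge> 1"
    and cond: "\<forall>i\<in>{1..m}. \<forall>j\<in>{1..m}. i \<noteq> j \<and> {i, j} \<notin> E \<longrightarrow>
         phi x y i j \<le> (1 / real (gdeg E i)) * (\<Sum>k\<in>nbrs E i. phi x y i k)
                      + (1 / real (gdeg E j)) * (\<Sum>k\<in>nbrs E j. phi x y j k)"
  shows "(tensor_sum_opnorm x y m)\<^sup>2 \<le>
           real m + (2 * (real m - 1) / real (min_deg m E) - 1) * (\<Sum>(i, j)\<in>edge_pairs m E. phi x y i j)"
proof (rule tensor_sum_opnorm_sq_le)
  \<comment> \<open>The argument does not need \<open>m2\<close>.\<close>
  define P where "P = (\<Sum>(i, j)\<in>{(i, j). i \<in> {1..m} \<and> j \<in> {1..m} \<and> i < j}. phi x y i j)"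
  have nonneg: "0 \<le> phi x y i j" if "i \<in> {1..m}" "j \<in> {1..m}" for i j
    using x_sa y_sa that by (intro phi_nonneg) (auto simp: contraction_def)
  have "0 \<le> real m + P"
    unfolding P_def using nonneg by (auto intro!: add_nonneg_nonneg sum_nonneg)
  have P_le: "P \<le> (2 * (real m - 1) / real (min_deg m E) - 1) * (\<Sum>(i, j)\<in>edge_pairs m E. phi x y i j)"
    unfolding P_def using G delta cond nonneg phi_commute by (rule pair_sum_le_edge_sum)
  fix u :: "nat \<Rightarrow> 'h" and v :: "nat \<Rightarrow> 'k" and n :: nat
  assume "tensor_norm2 u v n \<le> 1"
  have "tensor_op_image_norm2 x y m u v n \<le> (real m + P) * tensor_norm2 u v n"
    unfolding P_def by (rule tensor_op_image_norm2_le[OF x_sa y_sa])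
  also have "\<dots> \<le> real m + P"
    using \<open>tensor_norm2 u v n \<le> 1\<close> \<open>0 \<le> real m + P\<close> by (rule mult_left_le)
  finally show "tensor_op_image_norm2 x y m u v n
      \<le> real m + (2 * (real m - 1) / real (min_deg m E) - 1) * (\<Sum>(i, j)\<in>edge_pairs m E. phi x y i j)"
    using P_le by simp
qed

end
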